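(* Let $a,b,c\in\mathbb{RP}^1$ be distinct. Let $U=(u_1,\dots,u_6)$ be a 6-tuple of nonzero vectors in $\mathbb R^2$ with $[u_1]=[u_2]=[u_3]=a$ and $[u_4]=[u_5]=[u_6]=b$ (so its configuration is $3\cdot\{a,b\}$), and let $U'=(u'_1,\dots,u'_6)$ be a 6-tuple of nonzero vectors with $[u'_1]=[u'_2]=[u'_3]=a$, $[u'_4]=[u'_5]=b$ and $[u'_6]=c$ (configuration $\{3\cdot a,2\cdot b,c\}$). Then $\Phi(U)$ and $\Phi(U')$ generate the same ray of $C_{6,2}$.
   Context: $[u]\in\mathbb{RP}^1$ denotes the point determined by a nonzero $u\in\mathbb R^2$. For a 6-tuple $U$ of vectors, $\Phi(U)\in\mathbb R^{15}$ is the vector with coordinates $\mathrm V_{I_1}\mathrm V_{I_2}\mathrm V_{I_3}$ indexed by the 15 partitions $I_1|I_2|I_3$ of $[6]$ into pairs, where $\mathrm V_{\{i,j\}}=\tfrac12|\det(u_i,u_j)|$ is the mixed area of the segments $[0,u_i],[0,u_j]$. $C_{6,2}$ is the conic hull of $\Phi(\mathcal Z_2^6)$, where $\Phi(Z)$ for zonoids $Z=(Z_1,\dots,Z_6)$ in $\mathbb R^2$ is defined in the same way with $\mathrm V_{\{i,j\}}=\mathrm V(Z_i,Z_j)$ the mixed area. *)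

theory Defs
  imports "HOL-Analysis.Analysis"
begin

text \<open>Nonzero vectors of the plane represent points of RP^1; two nonzero vectors
  determine the same point iff one is a nonzero multiple of the other.\<close>
definition same_point :: "real^2 \<Rightarrow> real^2 \<Rightarrow> bool" where
  "same_point u v \<longleftrightarrow> u \<noteq> 0 \<and> v \<noteq> 0 \<and> (\<exists>t. t \<noteq> 0 \<and> u = t *\<^sub>R v)"

definition det2 :: "real^2 \<Rightarrow> real^2 \<Rightarrow> real" where
  "det2 u v = u$1 * v$2 - u$2 * v$1"

text \<open>Mixed area of the segments [0,u] and [0,v].\<close>
definition seg_mixed_area :: "real^2 \<Rightarrow> real^2 \<Rightarrow> real" where
  "seg_mixed_area u v = \<bar>det2 u v\<bar> / 2"

definition pair_partitions :: "nat set set set" where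
  "pair_partitions = {P. (\<Union>P = {1..6::nat}) \<and> (\<forall>I\<in>P. card I = 2)
      \<and> (\<forall>I\<in>P. \<forall>J\<in>P. I \<noteq> J \<longrightarrow> I \<inter> J = {})}"

definition V_pair :: "(nat \<Rightarrow> real^2) \<Rightarrow> nat set \<Rightarrow> real" where
  "V_pair U I = seg_mixed_area (U (Min I)) (U (Max I))"

definition Phi :: "(nat \<Rightarrow> real^2) \<Rightarrow> nat set set \<Rightarrow> real" where
  "Phi U P = (\<Prod>I\<in>P. V_pair U I)"

definition same_ray :: "(nat set set \<Rightarrow> real) \<Rightarrow> (nat set set \<Rightarrow> real) \<Rightarrow> bool" where
  "same_ray x y \<longleftrightarrow> (\<exists>P\<in>pair_partitions. x P \<noteq> 0) \<and> (\<exists>P\<in>pair_partitions. y P \<noteq> 0)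
     \<and> (\<exists>t>0. \<forall>P\<in>pair_partitions. x P = t * y P)"

end

theory Submission
  imports Defs
begin

text \<open>If u1, u2, u3 are multiples s_i a of a, every pair partition with a block inside
  {1,2,3} contributes the factor |det(a,a)| = 0, and every other pair partition matches
  {1,2,3} with {4,5,6}; for such a matching the product of mixed areas factors as
  prod |s_i| * prod V(a, u_j), independently of the matching. So Phi(U) is a positive
  multiple of the indicator vector of the six matchings as soon as u4, u5, u6 are not
  parallel to a, which holds for both configurations.\<close>

lemma det2_scaleR_left [simp]: "det2 (s *\<^sub>R u) v = s * det2 u v"
  by (simp add: det2_def algebra_simps)

lemma det2_scaleR_right [simp]: "det2 u (s *\<^sub>R v) = s * det2 u v"
  by (simp add: det2_def algebra_simps)

lemma det2_self [simp]: "det2 u u = 0"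
  by (simp add: det2_def)

lemma same_point_trans:
  assumes "same_point u w" "same_point w v"
  shows "same_point u v"
proof -
  obtain s t where "s \<noteq> 0" "u = s *\<^sub>R w" "t \<noteq> 0" "w = t *\<^sub>R v"
    using assms unfolding same_point_def by blast
  then have "s * t \<noteq> 0" "u = (s * t) *\<^sub>R v" by simp_all
  then show ?thesis using assms unfolding same_point_def by blast
qed

lemma same_point_if_det2_eq_0:
  assumes "det2 u v = 0" "u \<noteq> 0" "v \<noteq> 0"
  shows "same_point u v"
proof -
  define t where "t = inner u v / inner v v"
  have "inner v v \<noteq> 0" using assms(3) by simp
  then have "u = t *\<^sub>R v"
    using assms(1) unfolding t_def
    by (auto simp: vec_eq_iff forall_2 inner_vec_def UNIV_2 det2_def field_simps)
  with assms(2) have "t \<noteq> 0" by auto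
  with \<open>u = t *\<^sub>R v\<close> show ?thesis using assms unfolding same_point_def by blast
qed

lemma seg_mixed_area_pos:
  assumes "u \<noteq> 0" "v \<noteq> 0" "\<not> same_point u v"
  shows "seg_mixed_area u v > 0"
  using same_point_if_det2_eq_0[OF _ assms(1,2)] assms(3) by (auto simp: seg_mixed_area_def)

text \<open>Counting: there are card A blocks, each meeting A at most once, and together they
  cover A.\<close>
lemma card_block_inter_eq_1:
  assumes fin: "finite (\<Union>P)"
    and pairs: "\<forall>I\<in>P. card I = 2"
    and disj: "\<forall>I\<in>P. \<forall>J\<in>P. I \<noteq> J \<longrightarrow> I \<inter> J = {}"
    and A: "A \<subseteq> \<Union>P" "card (\<Union>P) = 2 * card A"
    and no_block_inside: "\<forall>I\<in>P. \<not> I \<subseteq> A"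
    and I: "I \<in> P"
  shows "card (I \<inter> A) = 1"
proof (rule ccontr)
  assume "card (I \<inter> A) \<noteq> 1"
  have "finite P" using fin by (meson Sup_le_iff finite_UnionD)
  have fin_blocks: "\<forall>J\<in>P. finite J" using fin by (meson Union_upper finite_subset)
  have "card (\<Union>P) = (\<Sum>J\<in>P. card J)"
    using card_UN_disjoint[of P id] \<open>finite P\<close> fin_blocks disj by simp
  also have "\<dots> = 2 * card P" using pairs by simp
  finally have card_P: "card P = card A" using A(2) by simp
  have at_most_1: "card (J \<inter> A) \<le> 1" if "J \<in> P" for J
  proof -
    have "card (J \<inter> A) \<le> card J" "card (J \<inter> A) \<noteq> card J"
      using that fin_blocks no_block_inside card_mono card_subset_eq
      by (metis Int_lower1, metis Int_lower1 inf.orderI)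
    then show ?thesis using pairs that by auto
  qed
  have "A = (\<Union>J\<in>P. J \<inter> A)" using A(1) by blast
  also have "card \<dots> = (\<Sum>J\<in>P. card (J \<inter> A))"
    using \<open>finite P\<close> fin_blocks disj by (intro card_UN_disjoint) blast+
  also have "\<dots> < (\<Sum>J\<in>P. 1)"
    using \<open>finite P\<close> at_most_1 I \<open>card (I \<inter> A) \<noteq> 1\<close>
    by (intro sum_strict_mono_ex1) (auto simp: le_Suc_eq)
  finally show False using card_P by simp
qed

lemma bij_betw_block_representative:
  assumes disj: "\<forall>I\<in>P. \<forall>J\<in>P. I \<noteq> J \<longrightarrow> I \<inter> J = {}"
    and covered: "A \<subseteq> \<Union>P"
    and rep: "\<forall>I\<in>P. I \<inter> A = {h I}"
  shows "bij_betw h P A"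
proof (rule bij_betwI')
  show "h I = h J \<longleftrightarrow> I = J" if "I \<in> P" "J \<in> P" for I J
    using that disj rep by (metis IntD1 Int_iff empty_iff insertI1)
  show "h I \<in> A" if "I \<in> P" for I
    using that rep by blast
  show "\<exists>I\<in>P. a = h I" if "a \<in> A" for a
    using that covered rep by blast
qed

definition halves_matching :: "nat set set \<Rightarrow> bool" where
  "halves_matching P \<longleftrightarrow> (\<forall>I\<in>P. \<exists>i\<in>{1,2,3}. \<exists>j\<in>{4,5,6}. I = {i, j})"

lemma pair_partition_cases:
  assumes P: "P \<in> pair_partitions"
  shows "halves_matching P \<or> (\<exists>I\<in>P. I \<subseteq> {1,2,3})"
proof (rule disjCI)
  assume no_block_inside: "\<not> (\<exists>I\<in>P. I \<subseteq> {1,2,3})"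
  have Union: "\<Union>P = {1..6}" and pairs: "\<forall>I\<in>P. card I = 2"
    and disj: "\<forall>I\<in>P. \<forall>J\<in>P. I \<noteq> J \<longrightarrow> I \<inter> J = {}"
    using P by (auto simp: pair_partitions_def)
  show "halves_matching P"
    unfolding halves_matching_def
  proof
    fix I assume I: "I \<in> P"
    have "card (I \<inter> {1,2,3}) = 1"
      using no_block_inside Union pairs disj I
      by (intro card_block_inter_eq_1[where P = P]) auto
    then obtain i where i: "I \<inter> {1,2,3} = {i}" by (rule card_1_singletonE)
    have "finite I" using pairs I by (metis card.infinite zero_neq_numeral)
    then have "card (I - {1,2,3}) = 1"
      using card_Diff_subset_Int[of I "{1,2,3}"] pairs I \<open>card (I \<inter> {1,2,3}) = 1\<close> by simp
    then obtain j where j: "I - {1,2,3} = {j}" by (rule card_1_singletonE)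
    have "j \<in> I" "j \<notin> {1,2,3}" using j by auto
    then have "j \<in> {1..6}" "j \<notin> {1,2,3}" using Union I by blast+
    then have "j \<in> {4,5,6}" by auto
    moreover have "I = {i, j}" using i j by blast
    ultimately show "\<exists>i\<in>{1,2,3}. \<exists>j\<in>{4,5,6}. I = {i, j}" using i by blast
  qed
qed

lemma pair_partitions_finite:
  assumes "P \<in> pair_partitions"
  shows "finite P"
proof -
  have "P \<subseteq> Pow {1..6}" using assms by (auto simp: pair_partitions_def)
  then show ?thesis by (rule finite_subset) simp
qed

lemma seg_mixed_area_scaleR_left: "seg_mixed_area (s *\<^sub>R u) v = \<bar>s\<bar> * seg_mixed_area u v"
  by (simp add: seg_mixed_area_def abs_mult)

lemma Phi_eq_0_if_block_inside:
  assumes P: "P \<in> pair_partitions" and I: "I \<in> P" "I \<subseteq> {1,2,3}"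
    and W: "\<forall>i\<in>{1,2,3}. W i = s i *\<^sub>R a"
  shows "Phi W P = 0"
proof -
  have "finite P" "card I = 2"
    using P I pair_partitions_finite by (auto simp: pair_partitions_def)
  then obtain x y where "I = {x, y}" by (meson card_2_iff)
  then have "Min I \<in> I" "Max I \<in> I" by auto
  then have "W (Min I) = s (Min I) *\<^sub>R a" "W (Max I) = s (Max I) *\<^sub>R a" using I W by blast+
  then have "V_pair W I = 0" by (simp add: V_pair_def seg_mixed_area_def)
  then show ?thesis unfolding Phi_def using \<open>finite P\<close> I by (metis prod_zero_iff)
qed

lemma Phi_if_halves_matching:
  assumes P: "P \<in> pair_partitions" and "halves_matching P"
    and W: "\<forall>i\<in>{1,2,3}. W i = s i *\<^sub>R a"
  shows "Phi W P = (\<Prod>i\<in>{1,2,3}. \<bar>s i\<bar>) * (\<Prod>j\<in>{4,5,6}. seg_mixed_area a (W j))"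
proof -
  have Union: "\<Union>P = {1..6}" and disj: "\<forall>I\<in>P. \<forall>J\<in>P. I \<noteq> J \<longrightarrow> I \<inter> J = {}"
    using P by (auto simp: pair_partitions_def)
  have blocks: "I \<inter> {1,2,3} = {Min I} \<and> I \<inter> {4,5,6} = {Max I} \<and> I = {Min I, Max I}"
    if "I \<in> P" for I
  proof -
    have "\<exists>i\<in>{1,2,3}. \<exists>j\<in>{4,5,6}. I = {i, j}"
      using \<open>halves_matching P\<close> that unfolding halves_matching_def by (rule bspec)
    then obtain i j where "i \<in> {1,2,3}" "j \<in> {4,5,6::nat}" "I = {i, j}"
      by (elim bexE)
    moreover from this have "Min I = i" "Max I = j" by auto
    ultimately show ?thesis by auto
  qed
  have V: "V_pair W I = \<bar>s (Min I)\<bar> * seg_mixed_area a (W (Max I))" if "I \<in> P" for I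
  proof -
    have "Min I \<in> {1,2,3}" using blocks[OF that] by blast
    then have "W (Min I) = s (Min I) *\<^sub>R a" using W by blast
    then show ?thesis by (simp add: V_pair_def seg_mixed_area_scaleR_left)
  qed
  have bij_Min: "bij_betw Min P {1,2,3}" and bij_Max: "bij_betw Max P {4,5,6}"
    using disj Union blocks by (intro bij_betw_block_representative; auto)+
  have "Phi W P = (\<Prod>I\<in>P. \<bar>s (Min I)\<bar> * seg_mixed_area a (W (Max I)))"
    unfolding Phi_def using V by (rule prod.cong[OF refl])
  also have "\<dots> = (\<Prod>I\<in>P. \<bar>s (Min I)\<bar>) * (\<Prod>I\<in>P. seg_mixed_area a (W (Max I)))"
    by (rule prod.distrib)
  also have "\<dots> = (\<Prod>i\<in>{1,2,3}. \<bar>s i\<bar>) * (\<Prod>j\<in>{4,5,6}. seg_mixed_area a (W j))"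
    unfolding prod.reindex_bij_betw[OF bij_Min, of "\<lambda>i. \<bar>s i\<bar>"]
      prod.reindex_bij_betw[OF bij_Max, of "\<lambda>j. seg_mixed_area a (W j)"] ..
  finally show ?thesis .
qed

lemma Phi_if_first_half_collinear:
  assumes first: "\<forall>i\<in>{1,2,3}. same_point (W i) a"
    and second: "\<forall>j\<in>{4,5,6}. W j \<noteq> 0 \<and> \<not> same_point a (W j)"
  obtains K where "K > 0" "\<And>P. P \<in> pair_partitions \<Longrightarrow> Phi W P = (if halves_matching P then K else 0)"
proof -
  obtain s where s: "\<forall>i\<in>{1,2,3}. s i \<noteq> 0 \<and> W i = s i *\<^sub>R a"
    using first unfolding same_point_def by metis
  have "a \<noteq> 0" using first unfolding same_point_def by blast
  define K where "K = (\<Prod>i\<in>{1,2,3}. \<bar>s i\<bar>) * (\<Prod>j\<in>{4,5,6}. seg_mixed_area a (W j))"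
  have "K > 0"
    unfolding K_def using s second \<open>a \<noteq> 0\<close> by (simp add: seg_mixed_area_pos)
  moreover have "Phi W P = (if halves_matching P then K else 0)" if P: "P \<in> pair_partitions" for P
  proof (cases "halves_matching P")
    case True
    then show ?thesis using Phi_if_halves_matching[OF P True] s unfolding K_def by simp
  next
    case False
    then obtain I where "I \<in> P" "I \<subseteq> {1,2,3}" using pair_partition_cases[OF P] by blast
    then show ?thesis using Phi_eq_0_if_block_inside[OF P] s False by simp
  qed
  ultimately show ?thesis by (rule that)
qed

lemma halves_matching_example:
  "{{1,4},{2,5},{3,6}} \<in> pair_partitions" "halves_matching {{1,4},{2,5},{3,6}}"
  by (auto simp: pair_partitions_def halves_matching_def)

theorem lemma7p3:
  fixes a b c :: "real^2" and U U' :: "nat \<Rightarrow> real^2"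
  assumes "a \<noteq> 0" "b \<noteq> 0" "c \<noteq> 0"
    and "\<not> same_point a b" "\<not> same_point a c" "\<not> same_point b c"
    and "\<forall>i\<in>{1,2,3}. same_point (U i) a" "\<forall>i\<in>{4,5,6}. same_point (U i) b"
    and "\<forall>i\<in>{1,2,3}. same_point (U' i) a" "\<forall>i\<in>{4,5}. same_point (U' i) b"
    and "same_point (U' 6) c"
  shows "same_ray (Phi U) (Phi U')"
proof -
  have "\<forall>j\<in>{4,5,6}. U j \<noteq> 0 \<and> \<not> same_point a (U j)"
    using assms(4,8) same_point_trans unfolding same_point_def by blast
  then obtain K where K: "K > 0"
    "\<And>P. P \<in> pair_partitions \<Longrightarrow> Phi U P = (if halves_matching P then K else 0)"
    using Phi_if_first_half_collinear[OF assms(7)] by blast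
  have "\<forall>j\<in>{4,5,6}. U' j \<noteq> 0 \<and> \<not> same_point a (U' j)"
    using assms(4,5,10,11) same_point_trans unfolding same_point_def by blast
  then obtain K' where K': "K' > 0"
    "\<And>P. P \<in> pair_partitions \<Longrightarrow> Phi U' P = (if halves_matching P then K' else 0)"
    using Phi_if_first_half_collinear[OF assms(9)] by blast
  have "\<forall>P\<in>pair_partitions. Phi U P = K / K' * Phi U' P"
    using K K' by simp
  then show ?thesis
    unfolding same_ray_def using K K' halves_matching_example
    by (metis divide_pos_pos less_irrefl)
qed

end
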